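(* For every positive integer $l$ there exists a graph of order $2l$ and size $(l+2)(l+1)/2-2$ that admits a regular distance $l$-labeling of degree $2$.
   Context: All graphs are finite and simple; $d(u,v)$ denotes the usual graph distance; order means number of vertices and size means number of edges. For integers $m\le n$, $[m,n]=\{m,m+1,\ldots,n\}$. For a graph $G$ and a positive integer $l$, a distance $l$-labeling of $G$ is a function $f:V(G)\to[0,l]$ such that (i) $f(V(G))=[0,l]$ or $f(V(G))=[1,l]$, and (ii) whenever two distinct vertices $u,v$ satisfy $f(u)=f(v)=k$, we have $d(u,v)=k$. A distance $l$-labeling is regular of degree $r$ if for every $k\in[1,l]$ there are exactly $r$ vertices labeled $k$. *)

theory Defs
  imports Main
begin

definition simple_graph :: "'a set \<Rightarrow> ('a \<Rightarrow> 'a \<Rightarrow> bool) \<Rightarrow> bool" where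
  "simple_graph V E \<longleftrightarrow> finite V \<and> (\<forall>u v. E u v \<longrightarrow> u \<in> V \<and> v \<in> V)
     \<and> (\<forall>u v. E u v \<longrightarrow> E v u) \<and> (\<forall>u. \<not> E u u)"

definition graph_order :: "'a set \<Rightarrow> ('a \<Rightarrow> 'a \<Rightarrow> bool) \<Rightarrow> nat" where
  "graph_order V E = card V"

definition graph_size :: "'a set \<Rightarrow> ('a \<Rightarrow> 'a \<Rightarrow> bool) \<Rightarrow> nat" where
  "graph_size V E = card {{u, v} | u v. u \<in> V \<and> v \<in> V \<and> E u v}"

text \<open>A walk given as a nonempty list of vertices, consecutive ones adjacent; its length is length xs - 1.\<close>
definition is_walk :: "'a set \<Rightarrow> ('a \<Rightarrow> 'a \<Rightarrow> bool) \<Rightarrow> 'a list \<Rightarrow> bool" where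
  "is_walk V E xs \<longleftrightarrow> xs \<noteq> [] \<and> set xs \<subseteq> V \<and> (\<forall>i. Suc i < length xs \<longrightarrow> E (xs ! i) (xs ! Suc i))"

definition graph_dist_is :: "'a set \<Rightarrow> ('a \<Rightarrow> 'a \<Rightarrow> bool) \<Rightarrow> 'a \<Rightarrow> 'a \<Rightarrow> nat \<Rightarrow> bool" where
  "graph_dist_is V E u v k \<longleftrightarrow>
     (\<exists>xs. is_walk V E xs \<and> hd xs = u \<and> last xs = v \<and> length xs = Suc k) \<and>
     (\<forall>xs. is_walk V E xs \<and> hd xs = u \<and> last xs = v \<longrightarrow> Suc k \<le> length xs)"

definition distance_labeling :: "'a set \<Rightarrow> ('a \<Rightarrow> 'a \<Rightarrow> bool) \<Rightarrow> nat \<Rightarrow> ('a \<Rightarrow> nat) \<Rightarrow> bool" where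
  "distance_labeling V E l f \<longleftrightarrow>
     (f ` V = {0..l} \<or> f ` V = {1..l}) \<and>
     (\<forall>u\<in>V. \<forall>v\<in>V. u \<noteq> v \<and> f u = f v \<longrightarrow> graph_dist_is V E u v (f u))"

definition regular_distance_labeling :: "'a set \<Rightarrow> ('a \<Rightarrow> 'a \<Rightarrow> bool) \<Rightarrow> nat \<Rightarrow> nat \<Rightarrow> ('a \<Rightarrow> nat) \<Rightarrow> bool" where
  "regular_distance_labeling V E l r f \<longleftrightarrow>
     distance_labeling V E l f \<and> (\<forall>k\<in>{1..l}. card {v \<in> V. f v = k} = r)"

end

theory Submission
  imports Defs
begin

text \<open>Take the complete graph on the \<open>l + 1\<close> vertices \<open>0, l, \<dots>, 2l - 1\<close> and attach the path
  \<open>0 - 1 - \<dots> - (l - 1)\<close> at \<open>0\<close>; this has \<open>2l\<close> vertices and \<open>(l + 1)l/2 + (l - 1)\<close> edges.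
  Label a path vertex \<open>i\<close> by \<open>i + 1\<close> and a clique vertex \<open>l + j\<close> by \<open>j + 1\<close>, so label \<open>k\<close> sits exactly
  on \<open>k - 1\<close> and \<open>l + k - 1\<close>. These are joined by the walk down the path to \<open>0\<close> and one clique edge,
  of length \<open>k\<close>; no walk is shorter, because the potential that is \<open>i + 1\<close> on path vertex \<open>i\<close>,
  \<open>0\<close> on \<open>l + k - 1\<close> and \<open>1\<close> on the other clique vertices changes by at most \<open>1\<close> along each edge.\<close>

lemma is_walk_Cons:
  assumes "is_walk V E (x # xs)" "xs \<noteq> []"
  shows "is_walk V E xs" "E x (hd xs)"
  using assms unfolding is_walk_def
  by (auto simp: hd_conv_nth)

lemma is_walk_lipschitz_bound:
  assumes "is_walk V E xs" and lip: "\<And>x y. E x y \<Longrightarrow> \<bar>\<phi> x - \<phi> y\<bar> \<le> (1::int)"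
  shows "\<bar>\<phi> (hd xs) - \<phi> (last xs)\<bar> \<le> int (length xs) - 1"
  using assms(1)
proof (induction xs)
  case Nil
  then show ?case by (simp add: is_walk_def)
next
  case (Cons x xs)
  show ?case
  proof (cases "xs = []")
    case False
    with Cons.prems have "is_walk V E xs" "E x (hd xs)" by (auto dest: is_walk_Cons)
    with Cons.IH lip have "\<bar>\<phi> (hd xs) - \<phi> (last xs)\<bar> \<le> int (length xs) - 1" "\<bar>\<phi> x - \<phi> (hd xs)\<bar> \<le> 1"
      by auto
    with False show ?thesis by simp
  qed simp
qed

lemma graph_dist_isI_lipschitz:
  assumes walk: "is_walk V E xs" "hd xs = u" "last xs = v" "length xs = Suc k"
    and lip: "\<And>x y. E x y \<Longrightarrow> \<bar>\<phi> x - \<phi> y\<bar> \<le> (1::int)"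
    and gap: "int k \<le> \<bar>\<phi> u - \<phi> v\<bar>"
  shows "graph_dist_is V E u v k"
  unfolding graph_dist_is_def
proof (intro conjI allI impI)
  show "\<exists>xs. is_walk V E xs \<and> hd xs = u \<and> last xs = v \<and> length xs = Suc k"
    using walk by blast
next
  fix ys assume "is_walk V E ys \<and> hd ys = u \<and> last ys = v"
  with is_walk_lipschitz_bound[of V E ys \<phi>] lip gap show "Suc k \<le> length ys" by force
qed

lemma is_walk_rev:
  assumes "is_walk V E xs" and sym: "\<And>x y. E x y \<Longrightarrow> E y x"
  shows "is_walk V E (rev xs)"
  unfolding is_walk_def
proof (intro conjI allI impI)
  fix i assume i: "Suc i < length (rev xs)"
  have "E (xs ! (length xs - Suc (Suc i))) (xs ! Suc (length xs - Suc (Suc i)))"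
    using assms(1) i unfolding is_walk_def by simp
  moreover have "Suc (length xs - Suc (Suc i)) = length xs - Suc i" using i by simp
  ultimately show "E (rev xs ! i) (rev xs ! Suc i)" using i sym by (simp add: rev_nth)
qed (use assms(1) in \<open>auto simp: is_walk_def\<close>)

lemma graph_dist_is_sym:
  assumes "graph_dist_is V E u v k" and sym: "\<And>x y. E x y \<Longrightarrow> E y x"
  shows "graph_dist_is V E v u k"
proof -
  have rev_walk: "is_walk V E (rev xs) \<and> hd (rev xs) = b \<and> last (rev xs) = a"
    if "is_walk V E xs" "hd xs = a" "last xs = b" for xs a b
  proof -
    have "xs \<noteq> []" using that(1) by (simp add: is_walk_def)
    then show ?thesis using that is_walk_rev[OF that(1) sym] by (simp add: hd_rev last_rev)
  qed
  from assms(1) obtain xs where "is_walk V E xs" "hd xs = u" "last xs = v" "length xs = Suc k"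
    unfolding graph_dist_is_def by blast
  with rev_walk have "\<exists>ys. is_walk V E ys \<and> hd ys = v \<and> last ys = u \<and> length ys = Suc k"
    by (metis length_rev)
  moreover have "Suc k \<le> length ys" if "is_walk V E ys" "hd ys = v" "last ys = u" for ys
    using rev_walk[OF that] assms(1) unfolding graph_dist_is_def by (metis length_rev)
  ultimately show ?thesis unfolding graph_dist_is_def by blast
qed

definition kite_clique :: "nat \<Rightarrow> nat set" where
  "kite_clique l = insert 0 {l..<2*l}"

definition kite_edge :: "nat \<Rightarrow> nat \<Rightarrow> nat \<Rightarrow> bool" where
  "kite_edge l u v \<longleftrightarrow> u \<noteq> v \<and>
     ((u \<in> kite_clique l \<and> v \<in> kite_clique l) \<or> (u < l \<and> v < l \<and> (u = Suc v \<or> v = Suc u)))"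

definition kite_label :: "nat \<Rightarrow> nat \<Rightarrow> nat" where
  "kite_label l v = (if v < l then v + 1 else v + 1 - l)"

lemma kite_edge_sym: "kite_edge l u v \<Longrightarrow> kite_edge l v u"
  unfolding kite_edge_def by auto

lemma simple_graph_kite: "l \<ge> 1 \<Longrightarrow> simple_graph {..<2*l} (kite_edge l)"
  unfolding simple_graph_def kite_edge_def kite_clique_def by auto

lemma kite_edge_set:
  assumes "l \<ge> 1"
  shows "{{u, v} | u v. u \<in> {..<2*l} \<and> v \<in> {..<2*l} \<and> kite_edge l u v}
           = {B. B \<subseteq> kite_clique l \<and> card B = 2} \<union> (\<lambda>i. {i, Suc i}) ` {..<l - 1}"
    (is "?E = ?K \<union> ?P")
proof (intro equalityI subsetI)
  fix B assume "B \<in> ?E"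
  then obtain u v where B: "B = {u, v}" "kite_edge l u v" by blast
  show "B \<in> ?K \<union> ?P"
  proof (cases "u \<in> kite_clique l \<and> v \<in> kite_clique l")
    case True
    then show ?thesis using B by (auto simp: kite_edge_def)
  next
    case False
    then have "u < l \<and> v < l \<and> (u = Suc v \<or> v = Suc u)" using B by (auto simp: kite_edge_def)
    then show ?thesis using B by (auto simp: image_iff insert_commute)
  qed
next
  have edge_mem: "{u, v} \<in> ?E" if "u < 2*l" "v < 2*l" "kite_edge l u v" for u v
    using that by blast
  fix B assume "B \<in> ?K \<union> ?P"
  then show "B \<in> ?E"
  proof
    assume "B \<in> ?K"
    then obtain u v where "B = {u, v}" "u \<noteq> v" "u \<in> kite_clique l" "v \<in> kite_clique l"
      by (auto simp: card_2_iff)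
    moreover have "kite_clique l \<subseteq> {..<2*l}" using assms by (auto simp: kite_clique_def)
    ultimately show ?thesis unfolding \<open>B = {u, v}\<close> by (intro edge_mem) (auto simp: kite_edge_def)
  next
    assume "B \<in> ?P"
    then obtain i where "B = {i, Suc i}" "i < l - 1" by auto
    then show ?thesis unfolding \<open>B = {i, Suc i}\<close> by (intro edge_mem) (auto simp: kite_edge_def)
  qed
qed

lemma graph_size_kite:
  assumes "l \<ge> 1"
  shows "graph_size {..<2*l} (kite_edge l) = (l + 2) * (l + 1) div 2 - 2"
proof -
  let ?K = "{B. B \<subseteq> kite_clique l \<and> card B = 2}"
  let ?P = "(\<lambda>i. {i, Suc i}) ` {..<l - 1}"
  have "card (kite_clique l) = l + 1" using assms by (simp add: kite_clique_def)
  then have card_K: "card ?K = (l + 1) * l div 2"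
    using n_subsets[of "kite_clique l" 2] by (simp add: kite_clique_def choose_two)
  have "inj_on (\<lambda>i. {i, Suc i}) {..<l - 1}" by (auto simp: inj_on_def doubleton_eq_iff)
  then have card_P: "card ?P = l - 1" by (simp add: card_image)
  have "?K \<inter> ?P = {}" by (auto simp: kite_clique_def)
  then have "card (?K \<union> ?P) = (l + 1) * l div 2 + (l - 1)"
    using card_K card_P by (simp add: card_Un_disjoint kite_clique_def)
  moreover have "(l + 2) * (l + 1) div 2 = (l + 1) * l div 2 + (l + 1)"
    by (simp add: algebra_simps)
  ultimately show ?thesis
    unfolding graph_size_def kite_edge_set[OF assms] using assms by simp
qed

lemma kite_label_image: "kite_label l ` {..<2*l} = {1..l}"
proof (intro equalityI subsetI)
  fix k assume "k \<in> {1..l}"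
  then have "k - 1 < 2*l" "kite_label l (k - 1) = k" by (auto simp: kite_label_def)
  then show "k \<in> kite_label l ` {..<2*l}" by force
qed (auto simp: kite_label_def)

lemma kite_label_fiber:
  assumes "k \<in> {1..l}"
  shows "{v \<in> {..<2*l}. kite_label l v = k} = {k - 1, l + k - 1}"
  using assms by (auto simp: kite_label_def)

lemma graph_dist_is_kite_pair:
  assumes "1 \<le> k" "k \<le> l"
  shows "graph_dist_is {..<2*l} (kite_edge l) (k - 1) (l + k - 1) k"
proof -
  define xs where "xs = map (\<lambda>i. if i < k then k - 1 - i else l + k - 1) [0..<Suc k]"
  have len: "length xs = Suc k" by (simp add: xs_def)
  have nth: "xs ! i = (if i < k then k - 1 - i else l + k - 1)" if "i < Suc k" for i
    using that by (simp add: xs_def nth_map del: upt_Suc)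
  have walk: "is_walk {..<2*l} (kite_edge l) xs"
    unfolding is_walk_def
  proof (intro conjI allI impI)
    show "xs \<noteq> []" "set xs \<subseteq> {..<2*l}" using assms by (auto simp: xs_def)
  next
    fix i assume "Suc i < length xs"
    then show "kite_edge l (xs ! i) (xs ! Suc i)"
      using len nth[of i] nth[of "Suc i"] assms by (auto simp: kite_edge_def kite_clique_def)
  qed
  have "xs \<noteq> []" using len by auto
  then have ends: "hd xs = k - 1" "last xs = l + k - 1"
    using nth[of 0] nth[of k] len assms by (simp_all add: hd_conv_nth last_conv_nth)
  define \<phi> :: "nat \<Rightarrow> int"
    where "\<phi> x = (if x = l + k - 1 then 0 else if x < l then int x + 1 else 1)" for x
  have lip: "\<bar>\<phi> x - \<phi> y\<bar> \<le> 1" if "kite_edge l x y" for x y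
    using that assms unfolding \<phi>_def kite_edge_def kite_clique_def by auto
  have "\<phi> (k - 1) = int k" "\<phi> (l + k - 1) = 0" using assms by (auto simp: \<phi>_def)
  then show ?thesis using graph_dist_isI_lipschitz[OF walk ends len lip] by simp
qed

lemma regular_distance_labeling_kite:
  assumes "l \<ge> 1"
  shows "regular_distance_labeling {..<2*l} (kite_edge l) l 2 (kite_label l)"
  unfolding regular_distance_labeling_def distance_labeling_def
proof (intro conjI ballI impI disjI2)
  show "kite_label l ` {..<2*l} = {1..l}" by (rule kite_label_image)
next
  fix k assume "k \<in> {1..l}"
  then show "card {v \<in> {..<2*l}. kite_label l v = k} = 2" unfolding kite_label_fiber[OF \<open>k \<in> {1..l}\<close>] by auto
next
  fix u v assume uv: "u \<in> {..<2*l}" "v \<in> {..<2*l}" "u \<noteq> v \<and> kite_label l u = kite_label l v"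
  define k where "k = kite_label l u"
  have "k \<in> kite_label l ` {..<2*l}" using uv(1) k_def by blast
  then have k: "k \<in> {1..l}" by (simp only: kite_label_image)
  have "u \<in> {w \<in> {..<2*l}. kite_label l w = k}" "v \<in> {w \<in> {..<2*l}. kite_label l w = k}"
    using uv k_def by auto
  then have "u \<in> {k - 1, l + k - 1}" "v \<in> {k - 1, l + k - 1}"
    by (simp_all only: kite_label_fiber[OF k])
  with uv(3) consider "u = k - 1" "v = l + k - 1" | "u = l + k - 1" "v = k - 1" by auto
  then show "graph_dist_is {..<2*l} (kite_edge l) u v (kite_label l u)"
    using graph_dist_is_kite_pair[of k l] graph_dist_is_sym[OF _ kite_edge_sym] k
    unfolding k_def[symmetric] by cases auto
qed

theorem mainTheorem6:
  fixes l :: nat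
  assumes "l \<ge> 1"
  shows "\<exists>(V :: nat set) E f. simple_graph V E \<and> graph_order V E = 2 * l
           \<and> graph_size V E = (l + 2) * (l + 1) div 2 - 2
           \<and> regular_distance_labeling V E l 2 f"
  using simple_graph_kite[OF assms] graph_size_kite[OF assms]
    regular_distance_labeling_kite[OF assms]
  by (intro exI[of _ "{..<2*l}"] exI[of _ "kite_edge l"] exI[of _ "kite_label l"])
    (simp add: graph_order_def)

end
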